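(* Let $A$ be a $\mathrm{C}^*$-algebra and let $a,b\in A_+$ be positive elements such that $ab=0$, $a\in\overline{\mathrm{span}}\,AbA$, and $b$ is soft. Then $a+b$ is soft.
   Context: A positive element $c$ of a $\mathrm{C}^*$-algebra $A$ is called soft if its hereditary sub-$\mathrm{C}^*$-algebra $\overline{cAc}$ has no nonzero unital quotients. $\overline{\mathrm{span}}\,AbA$ denotes the closed two-sided ideal generated by $b$. *)

theory Defs
  imports "HOL-Analysis.Analysis"
begin

text \<open>A (possibly non-unital) C*-algebra structure on a real Banach algebra type 'a:
  sC is the complex scalar multiplication (extending the real one), st is the involution.\<close>

definition cstar_algebra :: "(complex \<Rightarrow> 'a::{banach,real_normed_algebra} \<Rightarrow> 'a) \<Rightarrow> ('a \<Rightarrow> 'a) \<Rightarrow> bool" where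
  "cstar_algebra sC st \<longleftrightarrow>
     (\<forall>r x. sC (complex_of_real r) x = r *\<^sub>R x) \<and>
     (\<forall>c x y. sC c (x + y) = sC c x + sC c y) \<and>
     (\<forall>c d x. sC (c + d) x = sC c x + sC d x) \<and>
     (\<forall>c d x. sC c (sC d x) = sC (c * d) x) \<and>
     (\<forall>x. sC 1 x = x) \<and>
     (\<forall>c x y. sC c (x * y) = sC c x * y) \<and>
     (\<forall>c x y. sC c (x * y) = x * sC c y) \<and>
     (\<forall>c x. norm (sC c x) = cmod c * norm x) \<and>
     (\<forall>x. st (st x) = x) \<and>
     (\<forall>x y. st (x + y) = st x + st y) \<and>
     (\<forall>c x. st (sC c x) = sC (cnj c) (st x)) \<and>
     (\<forall>x y. st (x * y) = st y * st x) \<and>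
     (\<forall>x. norm (st x * x) = (norm x)\<^sup>2)"

text \<open>Positive: self-adjoint with spectrum in [0,oo). The spectrum is computed in the
  unitization: for lambda \<noteq> 0, lambda \<notin> sp(a) iff lambda 1 - a has a two-sided inverse
  (1/lambda) 1 + c with c \<in> A, i.e. lambda c - (1/lambda) a - a c = 0 = lambda c - (1/lambda) a - c a.\<close>
definition positive :: "(complex \<Rightarrow> 'a::{banach,real_normed_algebra} \<Rightarrow> 'a) \<Rightarrow> ('a \<Rightarrow> 'a) \<Rightarrow> 'a \<Rightarrow> bool" where
  "positive sC st a \<longleftrightarrow> st a = a \<and>
     (\<forall>l::complex. \<not> (l \<in> complex_of_real ` {0..}) \<longrightarrow>
        (\<exists>c. sC l c - sC (1 / l) a - a * c = 0 \<and> sC l c - sC (1 / l) a - c * a = 0))"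

definition csubspace :: "(complex \<Rightarrow> 'a::{banach,real_normed_algebra} \<Rightarrow> 'a) \<Rightarrow> 'a set \<Rightarrow> bool" where
  "csubspace sC T \<longleftrightarrow> 0 \<in> T \<and> (\<forall>x\<in>T. \<forall>y\<in>T. x + y \<in> T) \<and> (\<forall>c. \<forall>x\<in>T. sC c x \<in> T)"

definition cspan :: "(complex \<Rightarrow> 'a::{banach,real_normed_algebra} \<Rightarrow> 'a) \<Rightarrow> 'a set \<Rightarrow> 'a set" where
  "cspan sC S = \<Inter>{T. S \<subseteq> T \<and> csubspace sC T}"

definition ideal_gen :: "(complex \<Rightarrow> 'a::{banach,real_normed_algebra} \<Rightarrow> 'a) \<Rightarrow> 'a \<Rightarrow> 'a set" where
  "ideal_gen sC b = closure (cspan sC {x * b * y | x y. True})"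

definition hered :: "'a::{banach,real_normed_algebra} \<Rightarrow> 'a set" where
  "hered c = closure {c * x * c | x. True}"

definition closed_ideal_of :: "(complex \<Rightarrow> 'a::{banach,real_normed_algebra} \<Rightarrow> 'a) \<Rightarrow> 'a set \<Rightarrow> 'a set \<Rightarrow> bool" where
  "closed_ideal_of sC B I \<longleftrightarrow> I \<subseteq> B \<and> csubspace sC I \<and> closed I \<and>
     (\<forall>x\<in>B. \<forall>y\<in>I. x * y \<in> I \<and> y * x \<in> I)"

text \<open>B has a nonzero unital quotient: a closed ideal I \<noteq> B such that B/I has a unit,
  i.e. some e \<in> B with e x - x, x e - x \<in> I for all x \<in> B.\<close>
definition has_nonzero_unital_quotient :: "(complex \<Rightarrow> 'a::{banach,real_normed_algebra} \<Rightarrow> 'a) \<Rightarrow> 'a set \<Rightarrow> bool" where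
  "has_nonzero_unital_quotient sC B \<longleftrightarrow>
     (\<exists>I. closed_ideal_of sC B I \<and> I \<noteq> B \<and> (\<exists>e\<in>B. \<forall>x\<in>B. e * x - x \<in> I \<and> x * e - x \<in> I))"

definition soft :: "(complex \<Rightarrow> 'a::{banach,real_normed_algebra} \<Rightarrow> 'a) \<Rightarrow> ('a \<Rightarrow> 'a) \<Rightarrow> 'a \<Rightarrow> bool" where
  "soft sC st c \<longleftrightarrow> positive sC st c \<and> \<not> has_nonzero_unital_quotient sC (hered c)"

end

theory Submission
  imports Defs
begin

text \<open>
  Write \<open>c = a + b\<close>. Suppose \<open>hered c\<close> has a unital quotient by a proper closed ideal \<open>I\<close>,
  with unit \<open>e\<close>. Because \<open>c\<close> acts as an approximate unit on \<open>hered c\<close> and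
  \<open>c b = b c = b\<^sup>2\<close>, a Neumann series argument produces \<open>v \<in> hered c\<close> with
  \<open>c v \<equiv> v c \<equiv> e\<close> modulo \<open>I\<close>; then \<open>b v v b\<close> is a unit of \<open>hered b\<close> modulo
  \<open>I \<inter> hered b\<close>. This quotient is nonzero: otherwise \<open>b \<in> I\<close>, hence \<open>a\<^sup>3 \<in> I\<close> because \<open>a\<close>
  lies in the closed ideal generated by \<open>b\<close>, and \<open>a v \<equiv> c v \<equiv> e\<close> gives \<open>e \<equiv> a\<^sup>3 v\<^sup>3 \<in> I\<close>,
  so \<open>I\<close> would be everything. This contradicts the softness of \<open>b\<close>.

  The analytic input is that a positive \<open>p\<close> lies in the closures of \<open>p\<^sup>2 A\<close>, \<open>A p\<^sup>2\<close> and
  \<open>p A p\<close>. Without functional calculus this is derived from the bound of the norm of a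
  self-adjoint element by its spectral radius, which is proved by averaging quasi-inverses
  over roots of unity, which turns \<open>x\<close> into \<open>x^(2^k)\<close>.
\<close>

section \<open>Quasi-inverses\<close>

text \<open>\<open>quasi_inverse y r\<close> says that \<open>1 + r\<close> is the inverse of \<open>1 - y\<close> in the unitization.\<close>

definition right_quasi_inverse :: "'a::ring \<Rightarrow> 'a \<Rightarrow> bool" where
  "right_quasi_inverse y r \<longleftrightarrow> r - y - y * r = 0"

definition left_quasi_inverse :: "'a::ring \<Rightarrow> 'a \<Rightarrow> bool" where
  "left_quasi_inverse y r \<longleftrightarrow> r - y - r * y = 0"

definition quasi_inverse :: "'a::ring \<Rightarrow> 'a \<Rightarrow> bool" where
  "quasi_inverse y r \<longleftrightarrow> right_quasi_inverse y r \<and> left_quasi_inverse y r"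

lemma quasi_inverse_iff: "quasi_inverse y r \<longleftrightarrow> y * r = r - y \<and> r * y = r - y"
  unfolding quasi_inverse_def right_quasi_inverse_def left_quasi_inverse_def
  by (auto simp: algebra_simps)

lemma right_left_quasi_inverse_eq:
  fixes y r r' :: "'a::ring"
  assumes "right_quasi_inverse y r" "left_quasi_inverse y r'"
  shows "r = r'"
proof -
  have r: "r = y + y * r" and r': "r' = y + r' * y"
    using assms unfolding right_quasi_inverse_def left_quasi_inverse_def by (simp_all add: algebra_simps)
  have "r' * y + r' * y * r = r' * r" by (subst r) (simp add: algebra_simps)
  also have "\<dots> = y * r + r' * y * r" by (subst r') (simp add: algebra_simps)
  finally have "r' * y = y * r" by simp
  then show ?thesis using r r' by simp
qed

lemma quasi_inverse_unique: "quasi_inverse y r \<Longrightarrow> quasi_inverse y r' \<Longrightarrow> r = r'"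
  unfolding quasi_inverse_def using right_left_quasi_inverse_eq by blast

lemma quasi_inverse_square:
  fixes y q1 q2 :: "'a::real_algebra"
  assumes "quasi_inverse y q1" "quasi_inverse (- y) q2"
  shows "quasi_inverse (y * y) ((1/2) *\<^sub>R (q1 + q2))"
proof -
  have 1: "y * q1 = q1 - y" "q1 * y = q1 - y" using assms(1) by (simp_all add: quasi_inverse_iff)
  have "- (y * q2) = q2 + y" "- (q2 * y) = q2 + y" using assms(2) by (simp_all add: quasi_inverse_iff)
  then have 2: "y * q2 = - y - q2" "q2 * y = - y - q2"
    by (metis add.commute minus_add_distrib minus_minus diff_conv_add_uminus)+
  have "y * y * (q1 + q2) = y * (y * q1) + y * (y * q2)" by (simp add: algebra_simps)
  also have "\<dots> = y * (q1 - y) + y * (- y - q2)" by (simp only: 1 2)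
  also have "\<dots> = y * q1 - y * q2 - 2 *\<^sub>R (y * y)" by (simp add: algebra_simps scaleR_2)
  also have "\<dots> = q1 + q2 - 2 *\<^sub>R (y * y)" by (simp add: 1 2)
  finally have R: "y * y * (q1 + q2) = q1 + q2 - 2 *\<^sub>R (y * y)" .
  have "(q1 + q2) * (y * y) = (q1 * y) * y + (q2 * y) * y" by (simp add: algebra_simps)
  also have "\<dots> = (q1 - y) * y + (- y - q2) * y" by (simp only: 1 2)
  also have "\<dots> = q1 * y - q2 * y - 2 *\<^sub>R (y * y)" by (simp add: algebra_simps scaleR_2)
  also have "\<dots> = q1 + q2 - 2 *\<^sub>R (y * y)" by (simp add: 1 2)
  finally have L: "(q1 + q2) * (y * y) = q1 + q2 - 2 *\<^sub>R (y * y)" .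
  show ?thesis unfolding quasi_inverse_iff mult_scaleR_left mult_scaleR_right R L
    by (simp add: scaleR_diff_right)
qed

lemma quasi_inverse_resolvent_identity:
  fixes X Y q1 q2 :: "'a::ring"
  assumes "quasi_inverse X q1" "quasi_inverse Y q2"
  shows "q1 - q2 = (X - Y) + q1 * (X - Y) + (X - Y) * q2 + q1 * (X - Y) * q2"
proof -
  have l1: "q1 = X + q1 * X" and r2: "q2 = Y + Y * q2"
    using assms by (simp_all add: quasi_inverse_iff)
  have "(X - Y) + q1 * (X - Y) + (X - Y) * q2 + q1 * (X - Y) * q2
      = (X + q1 * X) + (X + q1 * X) * q2 - (Y + Y * q2) - q1 * (Y + Y * q2)"
    by (simp add: algebra_simps)
  also have "\<dots> = q1 - q2" by (simp flip: l1 r2 add: algebra_simps)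
  finally show ?thesis by simp
qed

lemma norm_quasi_inverse_diff_le:
  fixes X Y q1 q2 :: "'a::real_normed_algebra"
  assumes "quasi_inverse X q1" "quasi_inverse Y q2"
  shows "norm (q1 - q2) \<le> norm (X - Y) * ((1 + norm q1) * (1 + norm q2))"
proof -
  let ?d = "X - Y"
  have "norm (q1 - q2) \<le> norm ?d + norm (q1 * ?d) + norm (?d * q2) + norm (q1 * ?d * q2)"
    unfolding quasi_inverse_resolvent_identity[OF assms]
    by (intro order.trans[OF norm_triangle_ineq] add_right_mono) (auto intro: norm_triangle_le)
  also have "\<dots> \<le> norm ?d + norm q1 * norm ?d + norm ?d * norm q2 + norm q1 * norm ?d * norm q2"
    by (intro add_mono norm_mult_ineq order.refl order.trans[OF norm_mult_ineq] mult_right_mono) auto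
  also have "\<dots> = norm ?d * ((1 + norm q1) * (1 + norm q2))" by (simp add: algebra_simps)
  finally show ?thesis .
qed

lemma norm_quasi_inverse_diff_le_small:
  fixes X Y q1 q2 :: "'a::real_normed_algebra"
  assumes "quasi_inverse X q1" "quasi_inverse Y q2" and small: "norm (X - Y) * (1 + norm q2) \<le> 1/2"
  shows "norm (q1 - q2) \<le> 2 * norm (X - Y) * (1 + norm q2)\<^sup>2"
proof -
  define K where "K = 1 + norm q2"
  have main: "norm (q1 - q2) \<le> norm (X - Y) * K * (1 + norm q1)"
    using norm_quasi_inverse_diff_le[OF assms(1,2)] by (simp add: K_def algebra_simps)
  have "norm q1 \<le> norm q2 + norm (q1 - q2)" by (metis norm_triangle_sub)
  also have "\<dots> \<le> norm q2 + 1/2 * (1 + norm q1)"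
    using main order.trans[OF main mult_right_mono[OF small[folded K_def]]] by simp
  finally have "1 + norm q1 \<le> 2 * K" by (simp add: K_def field_simps)
  then have "norm (X - Y) * K * (1 + norm q1) \<le> norm (X - Y) * K * (2 * K)"
    by (intro mult_left_mono) (auto simp: K_def)
  then show ?thesis using main by (simp add: K_def power2_eq_square algebra_simps)
qed

lemma norm_quasi_inverse_le:
  fixes y r :: "'a::real_normed_algebra"
  assumes "quasi_inverse y r"
  shows "norm r \<le> norm y + norm y * norm r"
proof -
  have "r = y + y * r" using assms by (simp add: quasi_inverse_iff)
  then have "norm r \<le> norm y + norm (y * r)" by (metis norm_triangle_ineq)
  then show ?thesis using norm_mult_ineq[of y r] by linarith
qed

lemma norm_le_quasi_inverse:
  fixes y r :: "'a::real_normed_algebra"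
  assumes "quasi_inverse y r"
  shows "norm y \<le> norm r + norm y * norm r"
proof -
  have "y = r - y * r" using assms by (simp add: quasi_inverse_iff)
  then have "norm y \<le> norm r + norm (y * r)" by (metis norm_triangle_ineq4)
  then show ?thesis using norm_mult_ineq[of y r] by linarith
qed

text \<open>\<open>1 - (X + Y - Y X) = (1 - Y)(1 - X)\<close> in the unitization, so a right quasi-inverse of
  \<open>X + Y - Y X\<close> yields one of \<open>Y\<close>.\<close>

lemma right_quasi_inverse_factor:
  fixes X Y Z q :: "'a::ring"
  assumes "X + Y - Y * X = Z" "right_quasi_inverse Z q"
  shows "right_quasi_inverse Y (q - X - X * q)"
proof -
  have "(q - X - X * q) - Y - Y * (q - X - X * q) = q - (X + Y - Y * X) - (X + Y - Y * X) * q"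
    by (simp add: algebra_simps)
  then show ?thesis using assms unfolding right_quasi_inverse_def by simp
qed

lemma left_quasi_inverse_factor:
  fixes X Y Z q :: "'a::ring"
  assumes "X + Y - X * Y = Z" "left_quasi_inverse Z q"
  shows "left_quasi_inverse Y (q - X - q * X)"
proof -
  have "(q - X - q * X) - Y - (q - X - q * X) * Y = q - (X + Y - X * Y) - q * (X + Y - X * Y)"
    by (simp add: algebra_simps)
  then show ?thesis using assms unfolding left_quasi_inverse_def by simp
qed

lemma quasi_inverse_add_orthogonal:
  fixes A B ra rb :: "'a::ring"
  assumes A: "quasi_inverse A ra" and B: "quasi_inverse B rb" and "A * B = 0" "B * A = 0"
  shows "quasi_inverse (A + B) (ra + rb + rb * ra)"
proof -
  have ra: "ra = A + A * ra" "ra = A + ra * A" and rb: "rb = B + B * rb" "rb = B + rb * B"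
    using A B by (simp_all add: quasi_inverse_iff)
  have "A * rb = A * B + A * B * rb" by (subst rb(1)) (simp add: algebra_simps)
  moreover have "B * ra = B * A + B * A * ra" by (subst ra(1)) (simp add: algebra_simps)
  moreover have "ra * B = A * B + ra * (A * B)" by (subst ra(2)) (simp add: algebra_simps)
  moreover have "rb * A = B * A + rb * (B * A)" by (subst rb(2)) (simp add: algebra_simps)
  ultimately have 0: "A * rb = 0" "B * ra = 0" "ra * B = 0" "rb * A = 0"
    using assms(3,4) by simp_all
  have Ara: "A * ra = ra - A" and raA: "ra * A = ra - A" and Brb: "B * rb = rb - B" and rbB: "rb * B = rb - B"
    using A B by (simp_all add: quasi_inverse_iff)
  have "(A + B) * (ra + rb + rb * ra) = A * ra + A * rb + A * rb * ra + B * ra + B * rb + B * rb * ra"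
    by (simp add: algebra_simps)
  also have "\<dots> = (ra - A) + (rb - B) + rb * ra" unfolding Ara Brb 0 by (simp add: algebra_simps 0)
  finally have R: "(A + B) * (ra + rb + rb * ra) = (ra - A) + (rb - B) + rb * ra" .
  have "(ra + rb + rb * ra) * (A + B) = ra * A + ra * B + rb * A + rb * B + rb * (ra * A) + rb * (ra * B)"
    by (simp add: algebra_simps)
  also have "\<dots> = (ra - A) + (rb - B) + rb * ra" unfolding raA rbB 0 by (simp add: algebra_simps 0)
  finally have L: "(ra + rb + rb * ra) * (A + B) = (ra - A) + (rb - B) + rb * ra" .
  show ?thesis unfolding quasi_inverse_iff R L by (simp add: algebra_simps)
qed

lemma quasi_inverse_scaleR_commute:
  fixes p q :: "'a::real_algebra"
  assumes "quasi_inverse (c *\<^sub>R p) q" "c \<noteq> 0"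
  shows "p * q = q * p"
proof -
  have "c *\<^sub>R (p * q) = c *\<^sub>R (q * p)"
    using assms(1) by (simp add: quasi_inverse_iff)
  then show ?thesis using assms(2) by simp
qed

lemma quasi_inverse_scaleR_approx_unit:
  fixes p q :: "'a::real_algebra"
  assumes q: "quasi_inverse (c *\<^sub>R p) q" and "c \<noteq> 0"
  defines "w \<equiv> c *\<^sub>R (q + q * q)"
  shows "p * p * w = p * q * q" "w * p * p = p * q * q" "p * w * p = p * q * q"
    and "p - p * q * q = (1 / c) *\<^sub>R (q - q * q)"
proof -
  have pq: "p * q = q * p" by (rule quasi_inverse_scaleR_commute[OF assms(1,2)])
  have q_eq: "q = c *\<^sub>R (p + p * q)" using q by (simp add: quasi_inverse_iff algebra_simps)
  then have "(1 / c) *\<^sub>R q = (1 / c) *\<^sub>R (c *\<^sub>R (p + p * q))" by (rule arg_cong)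
  then have pq1: "p + p * q = (1 / c) *\<^sub>R q" using \<open>c \<noteq> 0\<close> by simp
  have "p - p * q * q = (p + p * q) - (p + p * q) * q" by (simp add: algebra_simps)
  also have "\<dots> = (1 / c) *\<^sub>R q - ((1 / c) *\<^sub>R q) * q" unfolding pq1 ..
  finally show "p - p * q * q = (1 / c) *\<^sub>R (q - q * q)" by (simp add: scaleR_diff_right)
  have "p * q * q = p * (c *\<^sub>R (p + p * q)) * q" by (subst q_eq) (rule refl)
  then show ppw: "p * p * w = p * q * q" unfolding w_def by (simp add: algebra_simps)
  have lc: "p * (q * x) = q * (p * x)" for x by (metis pq mult.assoc)
  show "w * p * p = p * q * q" "p * w * p = p * q * q"
    using ppw unfolding w_def by (simp_all add: algebra_simps pq lc)
qed

fun spow :: "nat \<Rightarrow> 'a::times \<Rightarrow> 'a" where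
  "spow 0 w = w"
| "spow (Suc n) w = w * spow n w"

text \<open>\<open>spow n w = w\<^bsup>n+1\<^esup>\<close>, which makes sense without a unit.\<close>

lemma spow_Suc_right: "spow (Suc n) (w::'a::semigroup_mult) = spow n w * w"
proof (induction n)
  case (Suc n)
  then show ?case by (metis spow.simps(2) mult.assoc)
qed simp

lemma norm_spow_le: "norm (spow n (w::'a::real_normed_algebra)) \<le> norm w ^ Suc n"
proof (induction n)
  case (Suc n)
  then show ?case by (simp add: order.trans[OF norm_mult_ineq] mult_left_mono)
qed simp

lemma quasi_inverse_neumann:
  fixes w :: "'a::{banach,real_normed_algebra}"
  assumes "norm w < 1" and B: "closed B" "w \<in> B" "0 \<in> B"
    "\<forall>x\<in>B. \<forall>y\<in>B. x + y \<in> B" "\<forall>x\<in>B. \<forall>y\<in>B. x * y \<in> B"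
  shows "\<exists>r\<in>B. quasi_inverse w r"
proof -
  define r where "r = (\<Sum>n. spow n w)"
  have "summable (\<lambda>n. norm w ^ Suc n)" using assms(1) by (simp add: summable_geometric)
  then have sm: "summable (\<lambda>n. spow n w)" by (rule summable_comparison_test'[OF _ norm_spow_le])
  have tail: "(\<Sum>n. spow (Suc n) w) = r - w" unfolding r_def using suminf_split_head[OF sm] by simp
  have "w * r = (\<Sum>n. spow (Suc n) w)" unfolding r_def suminf_mult[OF sm, symmetric] by simp
  moreover have "r * w = (\<Sum>n. spow (Suc n) w)"
    unfolding r_def suminf_mult2[OF sm] by (simp only: spow_Suc_right)
  moreover have "spow n w \<in> B" for n by (induction n) (use B in auto)
  then have "(\<Sum>i<n. spow i w) \<in> B" for n by (induction n) (use B in auto)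
  then have "r \<in> B" unfolding r_def by (rule closed_sequentially[OF B(1) _ summable_LIMSEQ[OF sm]])
  ultimately show ?thesis using tail by (auto simp: quasi_inverse_iff)
qed

section \<open>Closures and hereditary subalgebras\<close>

lemma closure_continuous_image_mem:
  assumes "continuous_on UNIV f" "\<forall>x\<in>S. f x \<in> closure T" "y \<in> closure S"
  shows "f y \<in> closure T"
proof -
  have "f ` closure S \<subseteq> closure T"
    by (rule image_closure_subset) (use assms in \<open>auto intro: continuous_on_subset\<close>)
  then show ?thesis using assms(3) by blast
qed

lemma closure_mult_mem:
  fixes y y' :: "'a::real_normed_algebra"
  assumes "y \<in> closure S" "y' \<in> closure S'" "\<forall>s\<in>S. \<forall>s'\<in>S'. s * s' \<in> closure T"
  shows "y * y' \<in> closure T"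
proof -
  have "s * y' \<in> closure T" if "s \<in> S" for s
    by (rule closure_continuous_image_mem[of "\<lambda>u. s * u" S'])
      (use assms that in \<open>auto intro!: continuous_intros\<close>)
  then show ?thesis
    by (intro closure_continuous_image_mem[of "\<lambda>u. u * y'" S])
      (use assms in \<open>auto intro!: continuous_intros\<close>)
qed

lemma closure_sandwich_mem:
  fixes y y' z :: "'a::real_normed_algebra"
  assumes "y \<in> closure S" "y' \<in> closure S'" "\<forall>s\<in>S. \<forall>s'\<in>S'. s * z * s' \<in> closure T"
  shows "y * z * y' \<in> closure T"
proof -
  have "z * y' \<in> closure ((*) z ` S')"
    by (rule closure_continuous_image_mem[OF _ _ assms(2)])
      (auto intro!: continuous_intros closure_subset[THEN subsetD])
  then show ?thesis
    unfolding mult.assoc by (rule closure_mult_mem[OF assms(1)]) (use assms(3) in \<open>auto simp: mult.assoc\<close>)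
qed

lemma closure_add_mem:
  fixes y y' :: "'a::real_normed_vector"
  assumes "y \<in> closure S" "y' \<in> closure S" "\<forall>s\<in>S. \<forall>s'\<in>S. s + s' \<in> S"
  shows "y + y' \<in> closure S"
proof -
  have "s + y' \<in> closure S" if "s \<in> S" for s
    by (rule closure_continuous_image_mem[of "\<lambda>u. s + u" S])
      (use assms that in \<open>auto intro!: continuous_intros closure_subset[THEN subsetD]\<close>)
  then show ?thesis
    by (intro closure_continuous_image_mem[of "\<lambda>u. u + y'" S])
      (use assms in \<open>auto intro!: continuous_intros\<close>)
qed

lemma closed_hered [simp]: "closed (hered c)"
  by (simp add: hered_def)

lemma sandwich_mem_hered: "c * x * c \<in> hered c"
  unfolding hered_def by (auto intro: closure_subset[THEN subsetD])

lemma hered_subset_closure_left: "hered c \<subseteq> closure {c * x |x. True}"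
  unfolding hered_def by (rule closure_mono) (auto simp: mult.assoc)

lemma hered_subset_closure_right: "hered c \<subseteq> closure {x * c |x. True}"
  unfolding hered_def by (rule closure_mono) auto

lemma sandwich_mem_hered_closure:
  assumes "y \<in> closure {c * x |x. True}" "y' \<in> closure {x * c |x. True}"
  shows "y * z * y' \<in> hered c"
  unfolding hered_def
proof (rule closure_sandwich_mem[OF assms], safe)
  fix x1 x2
  have "c * x1 * z * (x2 * c) = c * (x1 * z * x2) * c" by (simp add: mult.assoc)
  then show "c * x1 * z * (x2 * c) \<in> closure {c * x * c |x. True}"
    by (auto intro: closure_subset[THEN subsetD])
qed

lemma hered_mult:
  assumes "y1 \<in> hered c" "y2 \<in> hered c"
  shows "y1 * y2 \<in> hered c"
  unfolding hered_def
proof (rule closure_mult_mem[OF hered_subset_closure_left[THEN subsetD, OF assms(1)]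
      hered_subset_closure_right[THEN subsetD, OF assms(2)]], safe)
  fix x1 x2
  have "c * x1 * (x2 * c) = c * (x1 * x2) * c" by (simp add: mult.assoc)
  then show "c * x1 * (x2 * c) \<in> closure {c * x * c |x. True}"
    by (auto intro: closure_subset[THEN subsetD])
qed

lemma hered_subset_hered:
  assumes "p \<in> closure {c * x |x. True}" "p \<in> closure {x * c |x. True}"
  shows "hered p \<subseteq> hered c"
  unfolding hered_def[of p]
  by (rule closure_minimal) (use sandwich_mem_hered_closure[OF assms] in auto)

section \<open>Elementary facts about C*-algebras\<close>

locale cstar =
  fixes sC :: "complex \<Rightarrow> 'a::{banach,real_normed_algebra} \<Rightarrow> 'a" and st :: "'a \<Rightarrow> 'a"
  assumes cstar_algebra: "cstar_algebra sC st"
begin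

lemma sC_of_real: "sC (complex_of_real r) x = r *\<^sub>R x"
  and sC_add_right: "sC c (x + y) = sC c x + sC c y"
  and sC_add_left: "sC (c + d) x = sC c x + sC d x"
  and sC_sC: "sC c (sC d x) = sC (c * d) x"
  and sC_one: "sC 1 x = x"
  and sC_mult_left: "sC c (x * y) = sC c x * y"
  and sC_mult_right: "sC c (x * y) = x * sC c y"
  and norm_sC: "norm (sC c x) = cmod c * norm x"
  and st_add: "st (x + y) = st x + st y"
  and st_sC: "st (sC c x) = sC (cnj c) (st x)"
  and st_mult: "st (x * y) = st y * st x"
  and norm_st_mult_self: "norm (st x * x) = (norm x)\<^sup>2"
  using cstar_algebra unfolding cstar_algebra_def by metis+

lemma sC_zero_right [simp]: "sC c 0 = 0"
  using sC_add_right[of c 0 0] by simp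

lemma sC_minus_left: "sC (- c) x = - sC c x"
  using sC_add_left[of c "- c" x] by (simp add: eq_neg_iff_add_eq_0 add.commute sC_of_real[of 0, simplified])

lemma sC_minus_right: "sC c (- x) = - sC c x"
  using sC_add_right[of c x "- x"] by (simp add: eq_neg_iff_add_eq_0 add.commute)

lemma sC_diff_right: "sC c (x - y) = sC c x - sC c y"
  by (simp only: diff_conv_add_uminus sC_add_right sC_minus_right)

lemma sC_diff_left: "sC (c - d) x = sC c x - sC d x"
  by (simp only: diff_conv_add_uminus sC_add_left sC_minus_left)

lemma sC_scaleR: "sC c (r *\<^sub>R x) = r *\<^sub>R sC c x"
  by (metis sC_of_real sC_sC mult.commute)

lemma st_zero [simp]: "st 0 = 0"
  using st_add[of 0 0] by simp

lemma st_minus: "st (- x) = - st x"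
  using st_add[of x "- x"] by (simp add: eq_neg_iff_add_eq_0 add.commute)

lemma st_diff: "st (x - y) = st x - st y"
  by (simp only: diff_conv_add_uminus st_add st_minus)

lemma bounded_linear_sC: "bounded_linear (sC c)"
proof
  show "sC c (x + y) = sC c x + sC c y" for x y by (rule sC_add_right)
  show "sC c (r *\<^sub>R x) = r *\<^sub>R sC c x" for r x by (rule sC_scaleR)
  show "\<exists>K. \<forall>x. norm (sC c x) \<le> norm x * K" by (intro exI[of _ "cmod c"]) (simp add: norm_sC)
qed

lemma csubspace_closure:
  assumes "csubspace sC S" shows "csubspace sC (closure S)"
proof -
  have "sC c y \<in> closure S" if "y \<in> closure S" for c y
    using assms that linear_continuous_on[OF bounded_linear_sC]
    by (intro closure_continuous_image_mem[of "sC c" S])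
      (auto simp: csubspace_def intro: closure_subset[THEN subsetD])
  then show ?thesis
    using assms unfolding csubspace_def by (auto intro: closure_add_mem closure_subset[THEN subsetD])
qed

definition iter_square :: "nat \<Rightarrow> 'a \<Rightarrow> 'a" where
  "iter_square k x = ((\<lambda>y. y * y) ^^ k) x"

lemma iter_square_Suc: "iter_square (Suc k) x = iter_square k (x * x)"
  by (simp add: iter_square_def funpow_Suc_right del: funpow.simps)

lemma norm_iter_square:
  assumes "st h = h"
  shows "st (iter_square k h) = iter_square k h \<and> norm (iter_square k h) = norm h ^ 2 ^ k"
proof (induction k)
  case (Suc k)
  then have IH: "st (iter_square k h) = iter_square k h" "norm (iter_square k h) = norm h ^ 2 ^ k"
    by auto
  have "iter_square (Suc k) h = iter_square k h * iter_square k h"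
    by (simp add: iter_square_def)
  then show ?case
    using norm_st_mult_self[of "iter_square k h"] by (simp add: IH st_mult power_mult[symmetric] mult.commute)
qed (simp add: iter_square_def assms)

section \<open>Self-adjoint elements: norm and spectral radius\<close>

definition qinv :: "'a \<Rightarrow> complex \<Rightarrow> 'a" where
  "qinv x z = (SOME r. quasi_inverse (sC z x) r)"

lemma quasi_inverse_qinv: "quasi_inverse (sC z x) r \<Longrightarrow> quasi_inverse (sC z x) (qinv x z)"
  unfolding qinv_def by (rule someI)

lemma qinv_eqI: "quasi_inverse (sC z x) r \<Longrightarrow> qinv x z = r"
  using quasi_inverse_qinv quasi_inverse_unique by blast

lemma quasi_inverse_sC_square:
  assumes "quasi_inverse (sC z x) q1" "quasi_inverse (sC (- z) x) q2"
  shows "quasi_inverse (sC (z\<^sup>2) (x * x)) ((1/2) *\<^sub>R (q1 + q2))"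
proof -
  have "sC z x * sC z x = sC (z\<^sup>2) (x * x)"
    by (simp add: sC_mult_left[symmetric] sC_mult_right[symmetric] sC_sC power2_eq_square)
  then show ?thesis using quasi_inverse_square[of "sC z x" q1 q2] assms by (simp add: sC_minus_left)
qed

text \<open>Since \<open>(1 - y)\<^sup>-\<^sup>1 + (1 + y)\<^sup>-\<^sup>1 = 2 (1 - y\<^sup>2)\<^sup>-\<^sup>1\<close>, averaging the quasi-inverses of \<open>\<omega> \<nu> x\<close> over
  the \<open>2^k\<close>-th roots of unity \<open>\<omega>\<close> gives the quasi-inverse of \<open>\<nu>^(2^k) x^(2^k)\<close>.\<close>

definition qinv_mean :: "nat \<Rightarrow> 'a \<Rightarrow> complex \<Rightarrow> 'a" where
  "qinv_mean k x \<nu> = (1 / 2^k) *\<^sub>R (\<Sum>j<(2::nat)^k. qinv x (cis (2 * pi * real j / 2^k) * \<nu>))"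

lemma qinv_mean_Suc:
  assumes "\<forall>z. cmod z = cmod \<nu> \<longrightarrow> (\<exists>r. quasi_inverse (sC z x) r)"
  shows "qinv_mean (Suc k) x \<nu> = qinv_mean k (x * x) (\<nu>\<^sup>2)"
proof -
  define N :: nat where "N = 2^k"
  define z where "z j = cis (2 * pi * real j / 2^Suc k) * \<nu>" for j :: nat
  have "2 * pi * real (j + N) / 2^Suc k = 2 * pi * real j / 2^Suc k + pi" for j
    by (simp add: N_def field_simps)
  then have z_shift: "z (j + N) = - z j" for j by (simp add: z_def cis_mult[symmetric])
  have "(cis (2 * pi * real j / 2^Suc k))\<^sup>2 = cis (real 2 * (2 * pi * real j / 2^Suc k))" for j
    by (rule Complex.DeMoivre)
  then have "(cis (2 * pi * real j / 2^Suc k))\<^sup>2 = cis (2 * pi * real j / 2^k)" for j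
    by (simp add: mult.assoc)
  then have z_square: "(z j)\<^sup>2 = cis (2 * pi * real j / 2^k) * \<nu>\<^sup>2" for j
    by (simp add: z_def power_mult_distrib)
  have mean_pair: "qinv (x * x) ((z j)\<^sup>2) = (1/2) *\<^sub>R (qinv x (z j) + qinv x (- z j))" for j
  proof -
    have "cmod (z j) = cmod \<nu>" "cmod (- z j) = cmod \<nu>" by (simp_all add: z_def norm_mult)
    then obtain r1 r2 where "quasi_inverse (sC (z j) x) r1" "quasi_inverse (sC (- z j) x) r2"
      using assms by blast
    then show ?thesis by (intro qinv_eqI quasi_inverse_sC_square) (auto intro: quasi_inverse_qinv)
  qed
  have sum_double: "(\<Sum>j<N+N. f j) = (\<Sum>j<N. f j + f (j + N))" for f :: "nat \<Rightarrow> 'a"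
    by (simp add: sum.distrib lessThan_atLeast0 sum.atLeastLessThan_concat[of 0 N "N+N", symmetric]
        sum.shift_bounds_nat_ivl[of f 0 N N, symmetric])
  have "(2::nat)^Suc k = N + N" by (simp add: N_def)
  then have "qinv_mean (Suc k) x \<nu> = (1 / 2^Suc k) *\<^sub>R (\<Sum>j<N+N. qinv x (z j))"
    by (simp only: qinv_mean_def z_def)
  also have "\<dots> = (1 / 2^k) *\<^sub>R (\<Sum>j<N. (1/2) *\<^sub>R (qinv x (z j) + qinv x (- z j)))"
    unfolding sum_double z_shift scaleR_sum_right[symmetric] scaleR_scaleR by (simp add: N_def)
  also have "\<dots> = qinv_mean k (x * x) (\<nu>\<^sup>2)"
    unfolding qinv_mean_def N_def by (simp add: mean_pair[symmetric] z_square)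
  finally show ?thesis .
qed

lemma quasi_inverse_qinv_mean:
  assumes "\<forall>z. cmod z = cmod \<nu> \<longrightarrow> (\<exists>r. quasi_inverse (sC z x) r)"
  shows "quasi_inverse (sC (\<nu>^(2^k)) (iter_square k x)) (qinv_mean k x \<nu>)"
  using assms
proof (induction k arbitrary: x \<nu>)
  case 0
  then show ?case by (auto simp: qinv_mean_def iter_square_def intro: quasi_inverse_qinv)
next
  case (Suc k)
  have "\<exists>r. quasi_inverse (sC w (x * x)) r" if "cmod w = cmod (\<nu>\<^sup>2)" for w
  proof -
    have "cmod (csqrt w) = cmod \<nu>" "cmod (- csqrt w) = cmod \<nu>" using that by (simp_all add: norm_power)
    then obtain r1 r2 where "quasi_inverse (sC (csqrt w) x) r1" "quasi_inverse (sC (- csqrt w) x) r2"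
      using Suc.prems by blast
    from quasi_inverse_sC_square[OF this] show ?thesis by auto
  qed
  moreover have "(\<nu>\<^sup>2)^(2^k) = \<nu>^(2^Suc k)" by (simp add: power_mult[symmetric] mult.commute)
  ultimately show ?case
    using Suc.IH[of "\<nu>\<^sup>2" "x * x"] by (simp add: qinv_mean_Suc[OF Suc.prems] iter_square_Suc)
qed

lemma quasi_inverse_qinv_mean_of_real:
  assumes "\<forall>z\<in>cball 0 R. \<exists>r. quasi_inverse (sC z x) r" "0 \<le> r" "r \<le> R"
  shows "quasi_inverse ((r^(2^k)) *\<^sub>R iter_square k x) (qinv_mean k x (complex_of_real r))"
proof -
  have "\<forall>z. cmod z = cmod (complex_of_real r) \<longrightarrow> (\<exists>q. quasi_inverse (sC z x) q)"
    using assms by auto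
  from quasi_inverse_qinv_mean[OF this, of k] show ?thesis
    by (simp add: sC_of_real flip: of_real_power)
qed

lemma continuous_on_qinv:
  assumes "\<forall>z\<in>S. \<exists>r. quasi_inverse (sC z x) r"
  shows "continuous_on S (qinv x)"
  unfolding continuous_on_def
proof
  fix \<eta> assume "\<eta> \<in> S"
  define K where "K = 1 + norm (qinv x \<eta>)"
  have "((\<lambda>z. cmod (z - \<eta>) * norm x * K) \<longlongrightarrow> 0) (at \<eta> within S)"
    by (intro tendsto_eq_intros) auto
  then have "\<forall>\<^sub>F z in at \<eta> within S. cmod (z - \<eta>) * norm x * K < 1/2"
    by (rule order_tendstoD) (use \<open>\<eta> \<in> S\<close> in \<open>simp\<close>)
  moreover have "\<forall>\<^sub>F z in at \<eta> within S. z \<in> S" by (simp add: eventually_at_filter)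
  ultimately have "\<forall>\<^sub>F z in at \<eta> within S.
      norm (qinv x z - qinv x \<eta>) \<le> 2 * (cmod (z - \<eta>) * norm x) * K\<^sup>2"
  proof eventually_elim
    case (elim z)
    have Q: "quasi_inverse (sC z x) (qinv x z)" "quasi_inverse (sC \<eta> x) (qinv x \<eta>)"
      using assms elim(2) \<open>\<eta> \<in> S\<close> by (meson quasi_inverse_qinv)+
    have N: "norm (sC z x - sC \<eta> x) = cmod (z - \<eta>) * norm x"
      by (simp add: sC_diff_left[symmetric] norm_sC)
    have "norm (sC z x - sC \<eta> x) * (1 + norm (qinv x \<eta>)) \<le> 1/2"
      using elim(1) unfolding N K_def by simp
    from norm_quasi_inverse_diff_le_small[OF Q this] show ?case unfolding N K_def .
  qed
  moreover have "((\<lambda>z. 2 * (cmod (z - \<eta>) * norm x) * K\<^sup>2) \<longlongrightarrow> 0) (at \<eta> within S)"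
    by (intro tendsto_eq_intros) auto
  ultimately show "(qinv x \<longlongrightarrow> qinv x \<eta>) (at \<eta> within S)"
    by (rule LIM_zero_cancel[OF Lim_null_comparison])
qed

lemma qinv_lipschitz:
  assumes "\<forall>z\<in>cball 0 R. \<exists>r. quasi_inverse (sC z x) r"
  obtains L where "L \<ge> 0" "\<forall>z\<in>cball 0 R. \<forall>w\<in>cball 0 R. norm (qinv x z - qinv x w) \<le> L * cmod (z - w)"
proof -
  have "compact (qinv x ` cball 0 R)"
    by (rule compact_continuous_image[OF continuous_on_qinv[OF assms] compact_cball])
  then obtain M where M: "M \<ge> 0" "\<forall>z\<in>cball 0 R. norm (qinv x z) \<le> M"
    by (metis compact_imp_bounded bounded_pos image_eqI less_le)
  have "norm (qinv x z - qinv x w) \<le> norm x * (1 + M)\<^sup>2 * cmod (z - w)"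
    if "z \<in> cball 0 R" "w \<in> cball 0 R" for z w
  proof -
    have Q: "quasi_inverse (sC z x) (qinv x z)" "quasi_inverse (sC w x) (qinv x w)"
      using assms that by (meson quasi_inverse_qinv)+
    have "norm (qinv x z - qinv x w)
        \<le> cmod (z - w) * norm x * ((1 + norm (qinv x z)) * (1 + norm (qinv x w)))"
      using norm_quasi_inverse_diff_le[OF Q] by (simp add: sC_diff_left[symmetric] norm_sC)
    also have "\<dots> \<le> cmod (z - w) * norm x * ((1 + M) * (1 + M))"
      using M that by (intro mult_left_mono mult_mono) auto
    finally show ?thesis by (simp add: power2_eq_square algebra_simps)
  qed
  then show ?thesis using that[of "norm x * (1 + M)\<^sup>2"] by simp
qed

lemma norm_qinv_mean_diff_le:
  assumes lip: "\<forall>z\<in>cball 0 R. \<forall>w\<in>cball 0 R. norm (qinv x z - qinv x w) \<le> L * cmod (z - w)"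
    and "\<bar>\<rho>\<bar> \<le> R" "\<bar>\<rho>'\<bar> \<le> R"
  shows "norm (qinv_mean k x \<rho> - qinv_mean k x \<rho>') \<le> L * \<bar>\<rho> - \<rho>'\<bar>"
proof -
  define \<omega> where "\<omega> j = cis (2 * pi * real j / 2^k)" for j :: nat
  have norm_\<omega>: "cmod (\<omega> j * complex_of_real r) = \<bar>r\<bar>" for j r by (simp add: \<omega>_def norm_mult)
  have "norm (qinv x (\<omega> j * \<rho>) - qinv x (\<omega> j * \<rho>')) \<le> L * \<bar>\<rho> - \<rho>'\<bar>" for j
  proof -
    have "\<omega> j * \<rho> \<in> cball 0 R" "\<omega> j * \<rho>' \<in> cball 0 R" using norm_\<omega> assms(2,3) by auto
    then have "norm (qinv x (\<omega> j * \<rho>) - qinv x (\<omega> j * \<rho>')) \<le> L * cmod (\<omega> j * \<rho> - \<omega> j * \<rho>')"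
      using lip by blast
    also have "cmod (\<omega> j * \<rho> - \<omega> j * \<rho>') = \<bar>\<rho> - \<rho>'\<bar>"
      using norm_\<omega>[of j "\<rho> - \<rho>'"] by (simp add: algebra_simps)
    finally show ?thesis .
  qed
  then have "norm (\<Sum>j<(2::nat)^k. qinv x (\<omega> j * \<rho>) - qinv x (\<omega> j * \<rho>'))
      \<le> (\<Sum>j<(2::nat)^k. L * \<bar>\<rho> - \<rho>'\<bar>)"
    by (intro sum_norm_le)
  then show ?thesis
    unfolding qinv_mean_def \<omega>_def[symmetric] scaleR_diff_right[symmetric] sum_subtractf[symmetric]
    by (simp add: field_simps)
qed

text \<open>Choose \<open>m\<close> with \<open>(\<rho> \<parallel>x\<parallel>)^(2^m)\<close> small. The means \<open>g m\<close> are Lipschitz in \<open>\<rho>\<close> uniformly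
  in \<open>m\<close>, so \<open>g m \<rho>'\<close> is still small, which forces \<open>(\<rho>' \<parallel>x\<parallel>)^(2^m) < 1\<close>.\<close>

lemma norm_mult_lt_one_step:
  assumes sa: "st x = x" and ex: "\<forall>z\<in>cball 0 R. \<exists>r. quasi_inverse (sC z x) r"
    and lip: "\<forall>z\<in>cball 0 R. \<forall>w\<in>cball 0 R. norm (qinv x z - qinv x w) \<le> L * cmod (z - w)"
    and close: "L * \<bar>\<rho> - \<rho>'\<bar> \<le> 1/12"
    and \<rho>: "0 \<le> \<rho>" "\<rho> \<le> R" and \<rho>': "0 \<le> \<rho>'" "\<rho>' \<le> R"
    and less: "\<rho> * norm x < 1"
  shows "\<rho>' * norm x < 1"
proof -
  define a where "a k r = (r^(2^k)) *\<^sub>R iter_square k x" for k and r :: real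
  define g where "g k r = qinv_mean k x (complex_of_real r)" for k r
  have qi: "quasi_inverse (a k r) (g k r)" if "0 \<le> r" "r \<le> R" for k r
    unfolding a_def g_def using ex that by (rule quasi_inverse_qinv_mean_of_real)
  have norm_a: "norm (a k r) = (r * norm x)^(2^k)" if "0 \<le> r" for k r
    using norm_iter_square[OF sa, of k] that by (simp add: a_def power_mult_distrib)
  have "(\<lambda>m. (\<rho> * norm x)^m) \<longlonglongrightarrow> 0" using less \<rho>(1) by (intro LIMSEQ_power_zero) auto
  then have "\<forall>\<^sub>F m in sequentially. (\<rho> * norm x)^m < 1/24" by (rule order_tendstoD(2)) simp
  then obtain m where "(\<rho> * norm x)^m < 1/24" by (auto simp: eventually_sequentially)
  moreover have "(\<rho> * norm x)^(2^m) \<le> (\<rho> * norm x)^m"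
    using less \<rho>(1) by (intro power_decreasing) (auto intro: less_imp_le[OF less_exp])
  ultimately have "norm (a m \<rho>) \<le> 1/24" using norm_a[OF \<rho>(1)] by simp
  then have "norm (g m \<rho>) \<le> 1/24 + 1/24 * norm (g m \<rho>)"
    using norm_quasi_inverse_le[OF qi[OF \<rho>, of m]] mult_right_mono[of "norm (a m \<rho>)" "1/24" "norm (g m \<rho>)"]
    by simp
  then have "norm (g m \<rho>) \<le> 1/12" by simp
  moreover have "norm (g m \<rho> - g m \<rho>') \<le> 1/12"
    using norm_qinv_mean_diff_le[OF lip, of \<rho> \<rho>' m] \<rho> \<rho>' close by (simp add: g_def)
  moreover have "norm (g m \<rho>') \<le> norm (g m \<rho>) + norm (g m \<rho> - g m \<rho>')"
    by (metis norm_triangle_sub add.commute norm_minus_commute)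
  ultimately have "norm (g m \<rho>') \<le> 1/6" by linarith
  then have "norm (a m \<rho>') \<le> 1/6 + norm (a m \<rho>') * (1/6)"
    using norm_le_quasi_inverse[OF qi[OF \<rho>', of m]] mult_left_mono[of "norm (g m \<rho>')" "1/6" "norm (a m \<rho>')"]
    by simp
  then have "(\<rho>' * norm x)^(2^m) < 1" using norm_a[OF \<rho>'(1)] by simp
  then show ?thesis using \<rho>'(1) by (meson linorder_not_le one_le_power)
qed

text \<open>If \<open>z x\<close> is quasi-invertible for \<open>\<bar>z\<bar> \<le> R\<close>, the spectrum of \<open>x\<close> lies in the open disc of
  radius \<open>1/R\<close>; for self-adjoint \<open>x\<close> this bounds the norm. The bound is pushed from \<open>\<rho> = 0\<close>
  to \<open>\<rho> = R\<close> in steps of uniform size.\<close>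

lemma norm_less_if_quasi_invertible_on_cball:
  assumes sa: "st x = x" and "R > 0" and ex: "\<forall>z\<in>cball 0 R. \<exists>r. quasi_inverse (sC z x) r"
  shows "R * norm x < 1"
proof -
  obtain L where "L \<ge> 0"
    and lip: "\<forall>z\<in>cball 0 R. \<forall>w\<in>cball 0 R. norm (qinv x z - qinv x w) \<le> L * cmod (z - w)"
    using qinv_lipschitz[OF ex] by blast
  define \<delta> where "\<delta> = 1 / (12 * (L + 1))"
  have "\<delta> > 0" using \<open>L \<ge> 0\<close> by (simp add: \<delta>_def)
  have close: "L * \<bar>\<rho> - \<rho>'\<bar> \<le> 1/12" if "\<bar>\<rho> - \<rho>'\<bar> \<le> \<delta>" for \<rho> \<rho>'
  proof -
    have "L * \<bar>\<rho> - \<rho>'\<bar> \<le> L * \<delta>" using that \<open>L \<ge> 0\<close> by (rule mult_left_mono)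
    also have "\<dots> \<le> 1/12" using \<open>L \<ge> 0\<close> by (simp add: \<delta>_def field_simps)
    finally show ?thesis .
  qed
  have "\<forall>\<rho>. 0 \<le> \<rho> \<longrightarrow> \<rho> \<le> R \<longrightarrow> \<rho> \<le> real n * \<delta> \<longrightarrow> \<rho> * norm x < 1" for n
  proof (induction n)
    case (Suc n)
    show ?case
    proof (intro allI impI)
      fix \<rho>' assume \<rho>': "0 \<le> \<rho>'" "\<rho>' \<le> R" "\<rho>' \<le> real (Suc n) * \<delta>"
      define \<rho> where "\<rho> = max 0 (\<rho>' - \<delta>)"
      have \<rho>: "0 \<le> \<rho>" "\<rho> \<le> R" "\<rho> \<le> real n * \<delta>" and "\<bar>\<rho> - \<rho>'\<bar> \<le> \<delta>"
        using \<rho>' \<open>\<delta> > 0\<close> by (auto simp: \<rho>_def algebra_simps)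
      moreover have "\<rho> * norm x < 1" using Suc.IH \<rho> by blast
      ultimately show "\<rho>' * norm x < 1"
        using norm_mult_lt_one_step[OF sa ex lip close] \<rho>'(1,2) by blast
    qed
  qed simp
  moreover obtain n where "R / \<delta> \<le> real n" using real_arch_simple by blast
  then have "R \<le> real n * \<delta>" using \<open>\<delta> > 0\<close> by (simp add: field_simps)
  ultimately show ?thesis using \<open>R > 0\<close> by auto
qed

section \<open>Positive elements\<close>

lemma divide_mem_pos_reals_iff:
  "1 / z \<in> complex_of_real ` {0<..} \<longleftrightarrow> z \<in> complex_of_real ` {0<..}"
proof -
  have "1 / w \<in> complex_of_real ` {0<..}" if "w \<in> complex_of_real ` {0<..}" for w
  proof -
    from that obtain s where "s > 0" "w = complex_of_real s" by auto
    then show ?thesis by (intro image_eqI[of _ _ "1 / s"]) auto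
  qed
  from this this[of "1 / z"] show ?thesis by auto
qed

lemma positive_quasi_invertible:
  assumes p: "positive sC st p" and \<mu>: "\<mu> \<notin> complex_of_real ` {0<..}"
  shows "\<exists>q. quasi_inverse (sC \<mu> p) q"
proof (cases "\<mu> = 0")
  case True
  then show ?thesis by (auto simp: quasi_inverse_iff sC_of_real[of 0, simplified])
next
  case False
  have "1 / \<mu> \<notin> complex_of_real ` {0..}"
    using \<mu> False divide_mem_pos_reals_iff[of \<mu>] by (auto simp: atLeast_def order.order_iff_strict)
  then obtain c where "sC (1 / \<mu>) c - sC \<mu> p - p * c = 0" "sC (1 / \<mu>) c - sC \<mu> p - c * p = 0"
    using p unfolding positive_def by auto
  moreover have "sC \<mu> p * sC (1 / \<mu>) c = p * c" "sC (1 / \<mu>) c * sC \<mu> p = c * p"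
    using False by (simp_all add: sC_mult_left[symmetric] sC_mult_right[symmetric] sC_sC sC_one)
  ultimately have "quasi_inverse (sC \<mu> p) (sC (1 / \<mu>) c)"
    unfolding quasi_inverse_def right_quasi_inverse_def left_quasi_inverse_def by simp
  then show ?thesis by blast
qed

lemma quasi_inverse_self_adjoint:
  assumes "st X = X" "quasi_inverse X q"
  shows "st q = q"
proof -
  have "st (X * q) = st (q - X)" "st (q * X) = st (q - X)"
    using assms(2) by (simp_all add: quasi_inverse_iff)
  then have "quasi_inverse X (st q)"
    by (simp add: quasi_inverse_iff st_mult st_diff assms(1))
  then show ?thesis using quasi_inverse_unique assms(2) by blast
qed

text \<open>In the unitization, \<open>1 - (1+z) X = (1 - X)(1 - z q)\<close> when \<open>1 + q = (1 - X)\<^sup>-\<^sup>1\<close>.\<close>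

lemma quasi_invertible_sC_quasi_inverse:
  assumes X: "quasi_inverse X q" and q': "quasi_inverse (sC (1 + z) X) q'"
  shows "\<exists>r. quasi_inverse (sC z q) r"
proof -
  have "X * q = q - X" "q * X = q - X" using X by (simp_all add: quasi_inverse_iff)
  then have "X + sC z q - sC z q * X = sC (1 + z) X" "X + sC z q - X * sC z q = sC (1 + z) X"
    by (simp_all add: sC_mult_left[symmetric] sC_mult_right[symmetric] sC_diff_right
        sC_add_left sC_one)
  then have "right_quasi_inverse (sC z q) (q' - X - X * q')" "left_quasi_inverse (sC z q) (q' - X - q' * X)"
    using q' unfolding quasi_inverse_def by (blast intro: right_quasi_inverse_factor left_quasi_inverse_factor)+
  then show ?thesis
    using right_left_quasi_inverse_eq unfolding quasi_inverse_def by metis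
qed

lemma norm_quasi_inverse_neg_positive_less:
  assumes p: "positive sC st p" and "t > 0" and q: "quasi_inverse ((- 1 / t) *\<^sub>R p) q"
  shows "norm q < 2"
proof -
  define X where "X = (- 1 / t) *\<^sub>R p"
  have "st X = X" using p by (simp add: X_def positive_def sC_of_real[symmetric] st_sC)
  then have "st q = q" using q quasi_inverse_self_adjoint by (simp add: X_def)
  moreover have "\<exists>r. quasi_inverse (sC z q) r" if "z \<in> cball 0 (1/2)" for z
  proof -
    have "Re z \<ge> - 1/2" using that abs_Re_le_cmod[of z] by auto
    then have "Re ((1 + z) * complex_of_real (- 1 / t)) < 0" using \<open>t > 0\<close> by (simp add: field_simps)
    moreover have "w \<notin> complex_of_real ` {0<..}" if "Re w < 0" for w
      using that by auto
    ultimately have "(1 + z) * complex_of_real (- 1 / t) \<notin> complex_of_real ` {0<..}" by blast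
    then obtain q' where "quasi_inverse (sC (1 + z) X) q'"
      using positive_quasi_invertible[OF p] by (auto simp: X_def sC_of_real[symmetric] sC_sC)
    then show ?thesis using q by (intro quasi_invertible_sC_quasi_inverse) (auto simp: X_def)
  qed
  ultimately have "1/2 * norm q < 1" by (intro norm_less_if_quasi_invertible_on_cball) auto
  then show ?thesis by simp
qed

lemma positive_approximate_unit:
  assumes p: "positive sC st p" and "\<epsilon> > 0"
  shows "\<exists>w. norm (p - p * p * w) < \<epsilon> \<and> norm (p - w * p * p) < \<epsilon> \<and> norm (p - p * w * p) < \<epsilon>"
proof -
  define t where "t = \<epsilon> / 7"
  have "t > 0" using \<open>\<epsilon> > 0\<close> by (simp add: t_def)
  have "complex_of_real (- 1 / t) \<notin> complex_of_real ` {0<..}"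
    using \<open>t > 0\<close> by (subst inj_image_mem_iff[OF inj_of_real]) simp
  then obtain q where "quasi_inverse (sC (complex_of_real (- 1 / t)) p) q"
    using positive_quasi_invertible[OF p] by blast
  then have q: "quasi_inverse ((- 1 / t) *\<^sub>R p) q" by (simp only: sC_of_real)
  have "- 1 / t \<noteq> 0" using \<open>t > 0\<close> by simp
  note approx = quasi_inverse_scaleR_approx_unit[OF q this]
  have "norm q < 2" by (rule norm_quasi_inverse_neg_positive_less[OF p \<open>t > 0\<close> q])
  then have "norm q + norm (q * q) \<le> 6"
    using order.trans[OF norm_mult_ineq mult_mono[of "norm q" 2 "norm q" 2]] by simp
  have "norm (p - p * q * q) = t * norm (q - q * q)"
    using \<open>t > 0\<close> by (simp add: approx(4))
  also have "\<dots> \<le> t * (norm q + norm (q * q))"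
    using \<open>t > 0\<close> by (intro mult_left_mono norm_triangle_ineq4) auto
  also have "\<dots> \<le> t * 6"
    using \<open>t > 0\<close> \<open>norm q + norm (q * q) \<le> 6\<close> by (intro mult_left_mono) auto
  also have "\<dots> < \<epsilon>" using \<open>\<epsilon> > 0\<close> by (simp add: t_def)
  finally show ?thesis using approx(1-3) by metis
qed

lemma positive_mem_closure:
  assumes "positive sC st p"
  shows "p \<in> closure {p * p * w |w. True}" "p \<in> closure {w * p * p |w. True}"
    "p \<in> closure {p * w * p |w. True}"
  using positive_approximate_unit[OF assms]
  unfolding closure_approachable by (metis (mono_tags, lifting) dist_norm mem_Collect_eq norm_minus_commute)+

lemma positive_orthogonal_commute:
  assumes "positive sC st a" "positive sC st b" "a * b = 0"
  shows "b * a = 0"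
  using st_mult[of a b] assms unfolding positive_def by auto

lemma positive_add_orthogonal:
  assumes a: "positive sC st a" and b: "positive sC st b" and "a * b = 0"
  shows "positive sC st (a + b)"
  unfolding positive_def
proof (intro conjI allI impI)
  show "st (a + b) = a + b" using a b unfolding positive_def by (simp add: st_add)
  fix l :: complex assume l: "l \<notin> complex_of_real ` {0..}"
  then have "l \<noteq> 0" by force
  define \<mu> where "\<mu> = 1 / l"
  have "\<mu> \<notin> complex_of_real ` {0<..}"
    using l divide_mem_pos_reals_iff[of l] by (auto simp: \<mu>_def)
  then obtain ra rb where "quasi_inverse (sC \<mu> a) ra" "quasi_inverse (sC \<mu> b) rb"
    using positive_quasi_invertible a b by blast
  moreover have "sC \<mu> a * sC \<mu> b = 0" "sC \<mu> b * sC \<mu> a = 0"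
    using assms(3) positive_orthogonal_commute[OF a b assms(3)]
    by (simp_all add: sC_mult_left[symmetric] sC_mult_right[symmetric])
  ultimately obtain r where r: "quasi_inverse (sC \<mu> (a + b)) r"
    unfolding sC_add_right by (blast intro: quasi_inverse_add_orthogonal)
  have "(a + b) * sC \<mu> r = sC \<mu> (a + b) * r" "sC \<mu> r * (a + b) = r * sC \<mu> (a + b)"
    "sC l (sC \<mu> r) = r"
    using \<open>l \<noteq> 0\<close> by (simp_all add: sC_mult_left[symmetric] sC_mult_right[symmetric] sC_sC sC_one \<mu>_def)
  then show "\<exists>c. sC l c - sC (1 / l) (a + b) - (a + b) * c = 0 \<and> sC l c - sC (1 / l) (a + b) - c * (a + b) = 0"
    using r unfolding quasi_inverse_def right_quasi_inverse_def left_quasi_inverse_def \<mu>_def[symmetric]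
    by (intro exI[of _ "sC \<mu> r"]) auto
qed

section \<open>Hereditary subalgebras of positive elements\<close>

lemma csubspace_hered: "csubspace sC (hered p)"
  unfolding hered_def
proof (rule csubspace_closure)
  have "p * x * p + p * y * p = p * (x + y) * p" "sC z (p * x * p) = p * sC z x * p" for x y z
    by (simp_all add: algebra_simps sC_mult_left[symmetric] sC_mult_right[symmetric])
  then show "csubspace sC {p * x * p |x. True}"
    unfolding csubspace_def by (auto intro: exI[of _ 0])
qed

lemma zero_mem_hered: "0 \<in> hered (c::'a)"
  and add_mem_hered: "x \<in> hered c \<Longrightarrow> y \<in> hered c \<Longrightarrow> x + y \<in> hered c"
  using csubspace_hered[of c] unfolding csubspace_def by auto

lemma diff_mem_hered: "x \<in> hered (c::'a) \<Longrightarrow> y \<in> hered c \<Longrightarrow> x - y \<in> hered c"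
  using csubspace_hered[of c] unfolding csubspace_def
  by (metis diff_conv_add_uminus sC_minus_left sC_one)

lemma positive_mem_closure_left:
  assumes "positive sC st p" "c * p = p * p"
  shows "p \<in> closure {c * x |x. True}"
proof -
  have "p * p * w = c * (p * w)" for w by (simp add: assms(2) flip: mult.assoc)
  then have "{p * p * w |w. True} \<subseteq> {c * x |x. True}" by auto
  then show ?thesis using positive_mem_closure(1)[OF assms(1)] closure_mono by blast
qed

lemma positive_mem_closure_right:
  assumes "positive sC st p" "p * c = p * p"
  shows "p \<in> closure {x * c |x. True}"
proof -
  have "w * p * p = (w * p) * c" for w by (simp add: assms(2) mult.assoc)
  then have "{w * p * p |w. True} \<subseteq> {x * c |x. True}" by auto
  then show ?thesis using positive_mem_closure(2)[OF assms(1)] closure_mono by blast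
qed

lemma positive_mem_hered:
  assumes p: "positive sC st p" and "c * p = p * p" "p * c = p * p"
  shows "p \<in> hered c"
proof -
  have "{p * w * p |w. True} \<subseteq> hered c"
    using sandwich_mem_hered_closure[OF positive_mem_closure_left[OF p assms(2)]
        positive_mem_closure_right[OF p assms(3)]] by blast
  then show ?thesis
    using positive_mem_closure(3)[OF p] closure_minimal[OF _ closed_hered] by blast
qed

lemma hered_subset_closure_sandwich:
  assumes "positive sC st c"
  shows "hered c \<subseteq> closure {c * y * c |y. y \<in> hered c}"
proof -
  have "c * x * c \<in> closure {c * y * c |y. y \<in> hered c}" for x
  proof (rule closure_sandwich_mem[OF positive_mem_closure(1,2)[OF assms]], safe)
    fix w1 w2
    have "c * c * w1 * x * (w2 * c * c) = c * (c * (w1 * x * w2) * c) * c" by (simp add: mult.assoc)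
    then show "c * c * w1 * x * (w2 * c * c) \<in> closure {c * y * c |y. y \<in> hered c}"
      using sandwich_mem_hered by (auto intro!: closure_subset[THEN subsetD])
  qed
  then show ?thesis unfolding hered_def[of c] by (intro closure_minimal) auto
qed

lemma hered_subset_closure_mult_hered:
  assumes "positive sC st p"
  shows "hered p \<subseteq> closure {p * y |y. y \<in> hered p}" "hered p \<subseteq> closure {y * p |y. y \<in> hered p}"
proof -
  have "p * z * p \<in> closure {p * y |y. y \<in> hered p}" for z
  proof (rule closure_continuous_image_mem[of "\<lambda>u. u * z * p", OF _ _ positive_mem_closure(1)[OF assms]])
    have "p * p * w * z * p = p * (p * (w * z) * p)" for w by (simp add: mult.assoc)
    then show "\<forall>s\<in>{p * p * w |w. True}. s * z * p \<in> closure {p * y |y. y \<in> hered p}"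
      using sandwich_mem_hered by (auto intro!: closure_subset[THEN subsetD])
  qed (intro continuous_intros)
  then show "hered p \<subseteq> closure {p * y |y. y \<in> hered p}"
    unfolding hered_def[of p] by (intro closure_minimal) auto
  have "p * z * p \<in> closure {y * p |y. y \<in> hered p}" for z
  proof (rule closure_continuous_image_mem[of "\<lambda>u. p * z * u", OF _ _ positive_mem_closure(2)[OF assms]])
    have "p * z * (w * p * p) = (p * (z * w) * p) * p" for w by (simp add: mult.assoc)
    then show "\<forall>s\<in>{w * p * p |w. True}. p * z * s \<in> closure {y * p |y. y \<in> hered p}"
      using sandwich_mem_hered by (auto intro!: closure_subset[THEN subsetD])
  qed (intro continuous_intros)
  then show "hered p \<subseteq> closure {y * p |y. y \<in> hered p}"
    unfolding hered_def[of p] by (intro closure_minimal) auto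
qed

lemma positive_mem_closure_double_sandwich:
  assumes "positive sC st p"
  shows "p \<in> closure {p * p * w * p * p |w. True}"
proof -
  have "p * w * p \<in> closure {p * p * w * p * p |w. True}" for w
  proof (rule closure_sandwich_mem[OF positive_mem_closure(1,2)[OF assms]], safe)
    fix w1 w2
    have "p * p * w1 * w * (w2 * p * p) = p * p * (w1 * w * w2) * p * p" by (simp add: mult.assoc)
    then show "p * p * w1 * w * (w2 * p * p) \<in> closure {p * p * w * p * p |w. True}"
      by (auto intro: closure_subset[THEN subsetD])
  qed
  then have "closure {p * w * p |w. True} \<subseteq> closure {p * p * w * p * p |w. True}"
    by (intro closure_minimal) auto
  then show ?thesis using positive_mem_closure(3)[OF assms] by blast
qed

lemma ideal_gen_subset_closure:
  assumes "csubspace sC T" "\<forall>x y. x * b * y \<in> T"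
  shows "ideal_gen sC b \<subseteq> closure T"
proof -
  have "cspan sC {x * b * y |x y. True} \<subseteq> T" unfolding cspan_def using assms by blast
  then show ?thesis unfolding ideal_gen_def by (rule closure_mono)
qed

end

locale unital_quotient_of_hered_sum = cstar sC st
  for sC :: "complex \<Rightarrow> 'a::{banach,real_normed_algebra} \<Rightarrow> 'a" and st +
  fixes a b :: 'a and I :: "'a set" and e :: 'a
  assumes pos_a: "positive sC st a" and pos_b: "positive sC st b" and orth: "a * b = 0"
    and a_mem_ideal_gen: "a \<in> ideal_gen sC b"
    and ideal: "closed_ideal_of sC (hered (a + b)) I" and proper: "I \<noteq> hered (a + b)"
    and unit_mem: "e \<in> hered (a + b)"
    and unit: "\<forall>x\<in>hered (a + b). e * x - x \<in> I \<and> x * e - x \<in> I"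
begin

abbreviation "c \<equiv> a + b"
abbreviation "B \<equiv> hered (a + b)"
abbreviation "D \<equiv> hered b"

lemma orth_commute: "b * a = 0"
  by (rule positive_orthogonal_commute[OF pos_a pos_b orth])

lemma pos_c: "positive sC st c"
  by (rule positive_add_orthogonal[OF pos_a pos_b orth])

lemma c_mult_b: "c * b = b * b" and b_mult_c: "b * c = b * b"
  and c_mult_a: "c * a = a * a" and a_mult_c: "a * c = a * a"
  by (simp_all add: distrib_left distrib_right orth orth_commute)

lemma ideal_subset: "I \<subseteq> B" and closed_ideal: "closed I"
  and ideal_mult_left: "x \<in> B \<Longrightarrow> y \<in> I \<Longrightarrow> x * y \<in> I"
  and ideal_mult_right: "x \<in> B \<Longrightarrow> y \<in> I \<Longrightarrow> y * x \<in> I"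
  using ideal unfolding closed_ideal_of_def by auto

lemma csubspace_ideal: "csubspace sC I"
  using ideal unfolding closed_ideal_of_def by auto

lemma ideal_add: "x \<in> I \<Longrightarrow> y \<in> I \<Longrightarrow> x + y \<in> I"
  using csubspace_ideal unfolding csubspace_def by auto

lemma ideal_minus: "x \<in> I \<Longrightarrow> - x \<in> I"
  using csubspace_ideal unfolding csubspace_def by (metis sC_minus_left sC_one)

lemma ideal_diff: "x \<in> I \<Longrightarrow> y \<in> I \<Longrightarrow> x - y \<in> I"
  using ideal_add[of x "- y"] ideal_minus[of y] by simp

definition congr :: "'a \<Rightarrow> 'a \<Rightarrow> bool" (infix "\<simeq>" 50) where
  "x \<simeq> y \<longleftrightarrow> x - y \<in> I"

lemma congr_sym: "x \<simeq> y \<Longrightarrow> y \<simeq> x"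
  unfolding congr_def using ideal_minus[of "x - y"] by simp

lemma congr_trans [trans]: "x \<simeq> y \<Longrightarrow> y \<simeq> z \<Longrightarrow> x \<simeq> z"
  unfolding congr_def using ideal_add[of "x - y" "y - z"] by simp

lemma congr_mult_left: "u \<in> B \<Longrightarrow> x \<simeq> y \<Longrightarrow> u * x \<simeq> u * y"
  unfolding congr_def using ideal_mult_left[of u "x - y"] by (simp add: right_diff_distrib)

lemma congr_mult_right: "u \<in> B \<Longrightarrow> x \<simeq> y \<Longrightarrow> x * u \<simeq> y * u"
  unfolding congr_def using ideal_mult_right[of u "x - y"] by (simp add: left_diff_distrib)

lemma congr_unit_left: "x \<in> B \<Longrightarrow> e * x \<simeq> x"
  and congr_unit_right: "x \<in> B \<Longrightarrow> x * e \<simeq> x"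
  unfolding congr_def using unit by auto

lemma congr_ideal: "x \<in> I \<Longrightarrow> x \<simeq> y \<Longrightarrow> y \<in> I"
  unfolding congr_def using ideal_diff[of x "x - y"] by simp

lemma a_closure_left: "a \<in> closure {c * x |x. True}" and a_closure_right: "a \<in> closure {x * c |x. True}"
  and b_closure_left: "b \<in> closure {c * x |x. True}" and b_closure_right: "b \<in> closure {x * c |x. True}"
  using positive_mem_closure_left positive_mem_closure_right pos_a pos_b
    c_mult_a a_mult_c c_mult_b b_mult_c by auto

lemma a_mem_B: "a \<in> B" and b_mem_B: "b \<in> B" and c_mem_B: "c \<in> B"
  using positive_mem_hered pos_a pos_b pos_c c_mult_a a_mult_c c_mult_b b_mult_c by auto

lemma D_subset_B: "D \<subseteq> B"
  by (rule hered_subset_hered[OF b_closure_left b_closure_right])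

lemma b_mem_D: "b \<in> D"
  using positive_mem_hered[OF pos_b] by simp

lemma one_sided_inverses_mod_ideal:
  obtains y s where "y \<in> B" "s \<in> B" "c * y * c * s \<simeq> e" "s * (c * y * c) \<simeq> e"
proof -
  have "e \<in> closure {c * y * c |y. y \<in> B}"
    using hered_subset_closure_sandwich[OF pos_c] unit_mem by blast
  then obtain z where "z \<in> {c * y * c |y. y \<in> B}" "dist z e < 1"
    unfolding closure_approachable by (meson zero_less_one)
  then obtain y where y: "y \<in> B" "z = c * y * c" "dist z e < 1" by blast
  define w where "w = e - z"
  have "z \<in> B" using y c_mem_B by (simp add: hered_mult)
  then have w: "w \<in> B" "norm w < 1"
    using unit_mem y(3) by (simp_all add: w_def diff_mem_hered dist_norm norm_minus_commute)
  obtain r where r: "r \<in> B" "quasi_inverse w r"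
    using quasi_inverse_neumann[OF w(2) closed_hered w(1) zero_mem_hered] add_mem_hered hered_mult by blast
  have z: "z = e - w" by (simp add: w_def)
  have "w * r = r - w" "r * w = r - w" using r(2) by (simp_all add: quasi_inverse_iff)
  then have eq: "z * (e + r) - e = (e * e - e) + (e * r - r) - (w * e - w)"
    "(e + r) * z - e = (e * e - e) - (e * w - w) + (r * e - r)"
    unfolding z by (simp_all add: algebra_simps)
  have I: "e * e - e \<in> I" "e * r - r \<in> I" "w * e - w \<in> I" "e * w - w \<in> I" "r * e - r \<in> I"
    using unit unit_mem r(1) w(1) by auto
  have "z * (e + r) \<simeq> e" "(e + r) * z \<simeq> e"
    unfolding congr_def eq by (rule ideal_diff[OF ideal_add[OF I(1,2)] I(3)] ideal_add[OF ideal_diff[OF I(1,4)] I(5)])+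
  moreover have "e + r \<in> B" using unit_mem r(1) by (rule add_mem_hered)
  ultimately show ?thesis using that y(1,2) by blast
qed

lemma left_inverse_congr_right_inverse:
  assumes "v \<in> B" "v' \<in> B" "c * v \<simeq> e" "v' * c \<simeq> e"
  shows "v' \<simeq> v"
proof -
  have "v' \<simeq> v' * e" by (rule congr_sym[OF congr_unit_right[OF assms(2)]])
  also have "v' * e \<simeq> v' * (c * v)" by (rule congr_mult_left[OF assms(2) congr_sym[OF assms(3)]])
  also have "v' * (c * v) = (v' * c) * v" by (simp add: mult.assoc)
  also have "(v' * c) * v \<simeq> e * v" by (rule congr_mult_right[OF assms(1,4)])
  also have "e * v \<simeq> v" by (rule congr_unit_left[OF assms(1)])
  finally show ?thesis .
qed

lemma c_invertible_mod_ideal: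
  obtains v where "v \<in> B" "c * v \<simeq> e" "v * c \<simeq> e"
proof -
  obtain y s where ys: "y \<in> B" "s \<in> B" "c * y * c * s \<simeq> e" "s * (c * y * c) \<simeq> e"
    by (rule one_sided_inverses_mod_ideal)
  define v where "v = y * c * s"
  define v' where "v' = s * c * y"
  have B: "v \<in> B" "v' \<in> B" using ys c_mem_B by (simp_all add: v_def v'_def hered_mult)
  have cv: "c * v \<simeq> e" and v'c: "v' * c \<simeq> e" using ys(3,4) by (simp_all add: v_def v'_def mult.assoc)
  have "v * c \<simeq> v' * c"
    by (rule congr_mult_right[OF c_mem_B congr_sym[OF left_inverse_congr_right_inverse[OF B cv v'c]]])
  then have "v * c \<simeq> e" using v'c by (rule congr_trans)
  then show ?thesis using that B(1) cv by blast
qed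

lemma a_sandwich_mem_ideal:
  assumes "D \<subseteq> I"
  shows "a * (x * b * y) * a \<in> I"
proof -
  have "a * x * b * y * a \<in> closure I"
  proof (rule closure_continuous_image_mem[of "\<lambda>u. a * x * u * y * a", OF _ _
        positive_mem_closure_double_sandwich[OF pos_b]])
    have "a * x * b \<in> B" "b * y * a \<in> B"
      using sandwich_mem_hered_closure a_closure_left a_closure_right b_closure_left b_closure_right
      by blast+
    moreover have "b * w * b \<in> I" for w using assms sandwich_mem_hered by blast
    moreover have "a * x * (b * b * w * b * b) * y * a = (a * x * b) * (b * w * b) * (b * y * a)" for w
      by (simp add: mult.assoc)
    ultimately show "\<forall>s\<in>{b * b * w * b * b |w. True}. a * x * s * y * a \<in> closure I"
      using ideal_mult_left ideal_mult_right by (auto intro!: closure_subset[THEN subsetD])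
  qed (intro continuous_intros)
  then show ?thesis using closed_ideal by (simp add: mult.assoc)
qed

lemma a_cube_mem_ideal:
  assumes "D \<subseteq> I"
  shows "a * a * a \<in> I"
proof -
  define T where "T = {g. a * g * a \<in> I}"
  have "csubspace sC T"
    unfolding csubspace_def T_def
    using csubspace_ideal unfolding csubspace_def
    by (auto simp: algebra_simps sC_mult_left[symmetric] sC_mult_right[symmetric])
  then have "a \<in> closure T"
    using ideal_gen_subset_closure a_sandwich_mem_ideal[OF assms] a_mem_ideal_gen by (auto simp: T_def)
  then have "a * a * a \<in> closure I"
    by (rule closure_continuous_image_mem[of "\<lambda>u. a * u * a", rotated 2])
      (auto simp: T_def intro!: continuous_intros closure_subset[THEN subsetD])
  then show ?thesis using closed_ideal by simp
qed

lemma hered_b_not_subset_ideal: "\<not> D \<subseteq> I"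
proof
  assume DI: "D \<subseteq> I"
  obtain v where v: "v \<in> B" "c * v \<simeq> e" by (rule c_invertible_mod_ideal)
  have "b * v \<in> I" using DI b_mem_D v(1) ideal_mult_right by blast
  then have "a * v \<simeq> c * v" unfolding congr_def using ideal_minus by (simp add: algebra_simps)
  then have av: "a * v \<simeq> e" using v(2) by (rule congr_trans)
  have step: "a * x * v \<simeq> e" if "x \<simeq> e" for x
  proof -
    have "a * x * v \<simeq> a * e * v" by (rule congr_mult_right[OF v(1) congr_mult_left[OF a_mem_B that]])
    also have "a * e * v \<simeq> a * v" by (rule congr_mult_right[OF v(1) congr_unit_right[OF a_mem_B]])
    finally show ?thesis using av by (rule congr_trans)
  qed
  have "(a * a * a) * (v * v * v) \<simeq> e"
    using step[OF step[OF av]] by (simp add: mult.assoc)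
  moreover have "(a * a * a) * (v * v * v) \<in> I"
    using a_cube_mem_ideal[OF DI] v(1) by (simp add: ideal_mult_right hered_mult)
  ultimately have "e \<in> I" by (rule congr_ideal[rotated])
  then have "x \<in> I" if "x \<in> B" for x
    using congr_ideal[OF ideal_mult_right[OF that] congr_unit_left[OF that]] by blast
  then show False using ideal_subset proper by blast
qed

lemma b_congr_of_inverse:
  assumes v: "v \<in> B" "c * v \<simeq> e" "v * c \<simeq> e"
  shows "b * b * v \<simeq> b" "v * b * b \<simeq> b" "b * v * b \<simeq> b"
proof -
  have bv: "b * v \<in> B" "v * b \<in> B" using b_mem_B v(1) by (auto intro: hered_mult)
  have "b \<simeq> b * e" by (rule congr_sym[OF congr_unit_right[OF b_mem_B]])
  also have "b * e \<simeq> b * (c * v)" by (rule congr_mult_left[OF b_mem_B congr_sym[OF v(2)]])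
  also have "b * (c * v) = b * b * v" by (simp add: b_mult_c flip: mult.assoc)
  finally show bbv: "b * b * v \<simeq> b" by (rule congr_sym)
  have "b \<simeq> e * b" by (rule congr_sym[OF congr_unit_left[OF b_mem_B]])
  also have "e * b \<simeq> (v * c) * b" by (rule congr_mult_right[OF b_mem_B congr_sym[OF v(3)]])
  also have "(v * c) * b = v * b * b" by (simp add: mult.assoc c_mult_b)
  finally show "v * b * b \<simeq> b" by (rule congr_sym)
  have "v * b \<simeq> v * b * e" by (rule congr_sym[OF congr_unit_right[OF bv(2)]])
  also have "v * b * e \<simeq> v * b * (c * v)" by (rule congr_mult_left[OF bv(2) congr_sym[OF v(2)]])
  also have "v * b * (c * v) = v * (b * c) * v" by (simp add: mult.assoc)
  also have "\<dots> = (v * c) * (b * v)" by (simp add: b_mult_c mult.assoc flip: c_mult_b)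
  also have "(v * c) * (b * v) \<simeq> e * (b * v)" by (rule congr_mult_right[OF bv(1) v(3)])
  also have "e * (b * v) \<simeq> b * v" by (rule congr_unit_left[OF bv(1)])
  finally have "b * (v * b) \<simeq> b * (b * v)" by (rule congr_mult_left[OF b_mem_B])
  then show "b * v * b \<simeq> b" using bbv by (simp add: mult.assoc congr_trans)
qed

lemma hered_b_unit_mod_ideal:
  obtains f where "f \<in> D" "\<And>x. x \<in> D \<Longrightarrow> f * x \<simeq> x" "\<And>x. x \<in> D \<Longrightarrow> x * f \<simeq> x"
proof -
  obtain v where v: "v \<in> B" "c * v \<simeq> e" "v * c \<simeq> e" by (rule c_invertible_mod_ideal)
  note b_congr = b_congr_of_inverse[OF v]
  have bv: "b * v \<in> B" "v * b \<in> B" using b_mem_B v(1) by (auto intro: hered_mult)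
  define f where "f = b * (v * v) * b"
  have "f * b = (b * v) * (v * b * b)" by (simp add: f_def mult.assoc)
  also have "\<dots> \<simeq> (b * v) * b" by (rule congr_mult_left[OF bv(1) b_congr(2)])
  finally have fb: "f * b \<simeq> b" using b_congr(3) by (rule congr_trans)
  have "b * f = (b * b * v) * (v * b)" by (simp add: f_def mult.assoc)
  also have "\<dots> \<simeq> b * (v * b)" by (rule congr_mult_right[OF bv(2) b_congr(1)])
  finally have bf: "b * f \<simeq> b" using b_congr(3) by (simp add: mult.assoc congr_trans)
  have "f * x - x \<in> I" if "x \<in> D" for x
  proof (rule closure_continuous_image_mem[of "\<lambda>u. f * u - u", where T = I, simplified closed_ideal closure_closed])
    show "x \<in> closure {b * y |y. y \<in> D}" using hered_subset_closure_mult_hered(1)[OF pos_b] that by blast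
    show "\<forall>s\<in>{b * y |y. y \<in> D}. f * s - s \<in> I"
      using congr_mult_right[OF _ fb] D_subset_B unfolding congr_def by (auto simp: mult.assoc)
  qed (intro continuous_intros)
  moreover have "x * f - x \<in> I" if "x \<in> D" for x
  proof (rule closure_continuous_image_mem[of "\<lambda>u. u * f - u", where T = I, simplified closed_ideal closure_closed])
    show "x \<in> closure {y * b |y. y \<in> D}" using hered_subset_closure_mult_hered(2)[OF pos_b] that by blast
    show "\<forall>s\<in>{y * b |y. y \<in> D}. s * f - s \<in> I"
      using congr_mult_left[OF _ bf] D_subset_B unfolding congr_def by (auto simp: mult.assoc)
  qed (intro continuous_intros)
  moreover have "f \<in> D" by (simp add: f_def sandwich_mem_hered)
  ultimately show ?thesis using that unfolding congr_def by blast
qed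

lemma hered_b_has_nonzero_unital_quotient: "has_nonzero_unital_quotient sC D"
  unfolding has_nonzero_unital_quotient_def
proof (intro exI[of _ "I \<inter> D"] conjI)
  show "closed_ideal_of sC D (I \<inter> D)"
    unfolding closed_ideal_of_def
    using csubspace_ideal csubspace_hered[of b] closed_ideal D_subset_B
      ideal_mult_left ideal_mult_right hered_mult[of _ b]
    by (auto simp: csubspace_def)
  show "I \<inter> D \<noteq> D" using hered_b_not_subset_ideal by blast
  obtain f where "f \<in> D" "\<And>x. x \<in> D \<Longrightarrow> f * x \<simeq> x" "\<And>x. x \<in> D \<Longrightarrow> x * f \<simeq> x"
    using hered_b_unit_mod_ideal by blast
  then show "\<exists>f\<in>D. \<forall>x\<in>D. f * x - x \<in> I \<inter> D \<and> x * f - x \<in> I \<inter> D"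
    unfolding congr_def by (intro bexI[of _ f]) (auto intro: diff_mem_hered hered_mult)
qed

end

theorem proposition3p1:
  fixes sC :: "complex \<Rightarrow> 'a::{banach,real_normed_algebra} \<Rightarrow> 'a" and st :: "'a \<Rightarrow> 'a"
    and a b :: 'a
  assumes "cstar_algebra sC st"
    and "positive sC st a" and "positive sC st b"
    and "a * b = 0"
    and "a \<in> ideal_gen sC b"
    and "soft sC st b"
  shows "soft sC st (a + b)"
proof -
  interpret cstar sC st by (rule cstar.intro) (rule assms(1))
  have "\<not> has_nonzero_unital_quotient sC (hered (a + b))"
  proof
    assume "has_nonzero_unital_quotient sC (hered (a + b))"
    then obtain I e where "closed_ideal_of sC (hered (a + b)) I" "I \<noteq> hered (a + b)"
      "e \<in> hered (a + b)" "\<forall>x\<in>hered (a + b). e * x - x \<in> I \<and> x * e - x \<in> I"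
      unfolding has_nonzero_unital_quotient_def by blast
    then interpret unital_quotient_of_hered_sum sC st a b I e
      using assms by unfold_locales auto
    show False using hered_b_has_nonzero_unital_quotient \<open>soft sC st b\<close> by (simp add: soft_def)
  qed
  then show ?thesis using positive_add_orthogonal assms(2-4) by (simp add: soft_def)
qed

end
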